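(* Let $k\ge 2$ be a natural number. (i) Let $f(t)=t^k+at^{k-1}-b$ with $a,b\in\mathbb{Z}$ and $b\ne 0$. Then $f$ admits polysmoothness $\phi(k-1)/(k-1)$. (ii) Let $f(t)=at^k-t+b$ with $a,b\in\mathbb{Z}$ and $ab\ne 0$. Then $f$ admits polysmoothness $\phi(k)/k$.
   Context: $\phi$ denotes Euler's totient function. A polynomial $f\in\mathbb{Z}[t]$ of positive degree admits polysmoothness $\theta$ (for a real $\theta\ge 0$) if there exists a non-constant polynomial $g\in\mathbb{Z}[t]$ such that every irreducible factor of $f(g(t))$ has degree at most $\theta\,(\deg f)(\deg g)$. *)

theory Defs
  imports "HOL-Computational_Algebra.Computational_Algebra" "HOL-Number_Theory.Number_Theory"
begin

definition admits_polysmoothness :: "int poly \<Rightarrow> real \<Rightarrow> bool" where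
  "admits_polysmoothness f \<theta> \<longleftrightarrow> degree f > 0 \<and>
     (\<exists>g :: int poly. degree g > 0 \<and>
        (\<forall>q :: int poly. irreducible q \<and> q dvd pcompose f g \<longrightarrow>
           real (degree q) \<le> \<theta> * real (degree f) * real (degree g)))"

end

theory Submission imports Defs begin

text \<open>In (i) the substitution \<open>g = b t^(k-1) - a\<close> gives \<open>f(g) = b ((t g)^(k-1) - 1)\<close>, and
in (ii) the substitution \<open>g = a t^k + b\<close> gives \<open>f(g) = a (g^k - t^k)\<close>. So in both cases \<open>f(g)\<close>
is a nonzero constant times \<open>P^n - Q^n\<close>. Over \<open>\<int>\<close> this factors as the product, over the
divisors \<open>d\<close> of \<open>n\<close>, of the homogenised cyclotomic polynomials \<open>Q^\<phi>(d) \<Phi>\<^sub>d(P/Q)\<close>, of degree at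
most \<open>\<phi>(d) max(deg P, deg Q) \<le> \<phi>(n) max(deg P, deg Q)\<close>. An irreducible factor of \<open>f(g)\<close>
divides one of them, and \<open>\<phi>(n) max(deg P, deg Q)\<close> is exactly the required bound.\<close>

lemma map_poly_of_int_add:
  "map_poly (of_int :: int \<Rightarrow> 'a::comm_ring_1) (p + q) = map_poly of_int p + map_poly of_int q"
  by (rule poly_eqI) (simp add: coeff_map_poly)

lemma map_poly_of_int_diff:
  "map_poly (of_int :: int \<Rightarrow> 'a::comm_ring_1) (p - q) = map_poly of_int p - map_poly of_int q"
  by (rule poly_eqI) (simp add: coeff_map_poly)

lemma map_poly_of_int_mult:
  "map_poly (of_int :: int \<Rightarrow> 'a::comm_ring_1) (p * q) = map_poly of_int p * map_poly of_int q"
  by (rule poly_eqI) (simp add: coeff_map_poly coeff_mult)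

lemma map_poly_of_int_prod:
  "map_poly (of_int :: int \<Rightarrow> 'a::comm_ring_1) (prod f A) = (\<Prod>x\<in>A. map_poly of_int (f x))"
  by (induction A rule: infinite_finite_induct) (auto simp: map_poly_of_int_mult)

lemma map_poly_of_int_eq_iff:
  "map_poly (of_int :: int \<Rightarrow> 'a::ring_char_0) p = map_poly of_int q \<longleftrightarrow> p = q"
  by (auto simp: poly_eq_iff coeff_map_poly)

lemma degree_map_poly_of_int:
  "degree (map_poly (of_int :: int \<Rightarrow> 'a::ring_char_0) p) = degree p"
  by (rule degree_map_poly) simp

lemma map_poly_of_int_monom_one_minus_one:
  "map_poly (of_int :: int \<Rightarrow> 'a::comm_ring_1) (Polynomial.monom 1 n - 1) = Polynomial.monom 1 n - 1"
  by (simp add: map_poly_of_int_diff map_poly_monom)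

lemma map_poly_of_int_quotient_by_monic:
  fixes A G :: "int poly" and C :: "'a::{idom,ring_char_0} poly"
  assumes monic: "lead_coeff G = 1" and eq: "map_poly of_int A = C * map_poly of_int G"
  shows "\<exists>F. map_poly of_int F = C"
proof -
  have "G \<noteq> 0" using monic by auto
  obtain q r where "pseudo_divmod A G = (q, r)" by (cases "pseudo_divmod A G") auto
  with pseudo_divmod[OF \<open>G \<noteq> 0\<close>] monic have A: "A = G * q + r" and r: "r = 0 \<or> degree r < degree G"
    by auto
  let ?G = "map_poly of_int G :: 'a poly" and ?D = "C - map_poly of_int q"
  have rem: "?G * ?D = map_poly of_int r"
    using eq unfolding A by (simp add: map_poly_of_int_add map_poly_of_int_mult algebra_simps)
  have "?D = 0"
  proof (rule ccontr)
    assume "?D \<noteq> 0"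
    moreover have "?G \<noteq> 0" using \<open>G \<noteq> 0\<close> by (metis map_poly_0 map_poly_of_int_eq_iff)
    ultimately have "degree G \<le> degree (?G * ?D)" and "?G * ?D \<noteq> 0"
      by (auto simp: degree_mult_eq degree_map_poly_of_int)
    thus False using r rem by (auto simp: degree_map_poly_of_int)
  qed
  thus ?thesis by auto
qed

lemma degree_eqI_coeff:
  "Polynomial.coeff p n \<noteq> 0 \<Longrightarrow> (\<And>i. n < i \<Longrightarrow> Polynomial.coeff p i = 0) \<Longrightarrow> degree p = n"
  by (rule antisym) (auto intro: degree_le le_degree)

lemma pcompose_power_left: "pcompose (p ^ n) q = pcompose p q ^ n"
  by (induction n) (simp_all add: pcompose_1 pcompose_mult)

lemma pcompose_monom: "pcompose (Polynomial.monom c n) q = Polynomial.smult c (q ^ n)"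
  by (simp add: monom_altdef pcompose_smult pcompose_power_left pcompose_pCons)

lemma irreducible_dvd_smult:
  fixes q p :: "'a::{factorial_ring_gcd,semiring_gcd_mult_normalize} poly"
  assumes "irreducible q" "q dvd Polynomial.smult c p" "c \<noteq> 0"
  shows "degree q = 0 \<or> q dvd p"
proof -
  have "q dvd [:c:] * p" using assms(2) by simp
  hence "q dvd [:c:] \<or> q dvd p"
    using assms(1) prime_elem_dvd_mult_iff prime_elem_iff_irreducible by blast
  thus ?thesis
    using assms(3) dvd_imp_degree_le[of q "[:c:]"] by auto
qed

definition primitive_roots :: "nat \<Rightarrow> complex set" where
  "primitive_roots d = {z. 0 < d \<and> z ^ d = 1 \<and> (\<forall>e. 0 < e \<and> e < d \<longrightarrow> z ^ e \<noteq> 1)}"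

definition cyclotomic :: "nat \<Rightarrow> complex poly" where
  "cyclotomic d = (\<Prod>z\<in>primitive_roots d. [:-z, 1:])"

lemma finite_primitive_roots: "finite (primitive_roots d)"
proof (cases "d > 0")
  case True
  have "primitive_roots d \<subseteq> {z. z ^ d = 1}" by (auto simp: primitive_roots_def)
  thus ?thesis using finite_nth_roots[OF True] finite_subset by blast
qed (auto simp: primitive_roots_def)

lemma primitive_roots_disjoint: "d \<noteq> e \<Longrightarrow> primitive_roots d \<inter> primitive_roots e = {}"
  unfolding primitive_roots_def by (auto dest: linorder_neqE_nat)

lemma roots_unity_eq_UN_primitive_roots:
  assumes "n > 0"
  shows "{z::complex. z ^ n = 1} = (\<Union>d\<in>{d. d dvd n}. primitive_roots d)"
proof safe
  fix z :: complex assume z: "z ^ n = 1"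
  define d where "d = (LEAST e. 0 < e \<and> z ^ e = 1)"
  have d: "0 < d \<and> z ^ d = 1"
    unfolding d_def by (rule LeastI[of _ n]) (use assms z in blast)
  have min: "\<And>e. 0 < e \<Longrightarrow> e < d \<Longrightarrow> z ^ e \<noteq> 1"
    unfolding d_def using not_less_Least by blast
  have "z ^ n = (z ^ d) ^ (n div d) * z ^ (n mod d)"
    by (simp only: power_add [symmetric] power_mult [symmetric] mult_div_mod_eq)
  hence "z ^ (n mod d) = 1" using z d by simp
  hence "d dvd n" using min[of "n mod d"] d by (auto simp: dvd_eq_mod_eq_0)
  moreover have "z \<in> primitive_roots d" using d min by (auto simp: primitive_roots_def)
  ultimately show "z \<in> (\<Union>d\<in>{d. d dvd n}. primitive_roots d)" by blast
next
  fix z d assume "d dvd n" "z \<in> primitive_roots d"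
  thus "z ^ n = 1" by (auto simp: primitive_roots_def power_mult elim!: dvdE)
qed

lemma monom_one_minus_one_eq_prod_roots_unity:
  assumes n: "n > 0"
  shows "Polynomial.monom 1 n - 1 = (\<Prod>z\<in>{z::complex. z ^ n = 1}. [:-z, 1:])"
proof -
  define p :: "complex poly" where "p = Polynomial.monom 1 n - 1"
  have "degree p = n"
    by (rule degree_eqI_coeff) (use n in \<open>auto simp: p_def coeff_monom\<close>)
  hence "lead_coeff p = 1" using n by (simp add: p_def coeff_monom)
  have "rsquarefree p"
    unfolding rsquarefree_roots
  proof (intro allI notI)
    fix z assume "poly p z = 0 \<and> poly (pderiv p) z = 0"
    hence "z ^ n = 1" "of_nat n * z ^ (n - 1) = 0"
      by (auto simp: p_def pderiv_diff pderiv_monom poly_monom)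
    thus False using n by (cases "z = 0") (auto simp: power_0_left)
  qed
  hence "Polynomial.smult (lead_coeff p) (\<Prod>z|poly p z = 0. [:-z, 1:]) = p"
    by (rule complex_poly_decompose_rsquarefree)
  thus ?thesis using \<open>lead_coeff p = 1\<close> by (simp add: p_def poly_monom)
qed

lemma monom_one_minus_one_eq_prod_cyclotomic:
  assumes "n > 0"
  shows "Polynomial.monom 1 n - 1 = (\<Prod>d\<in>{d. d dvd n}. cyclotomic d)"
  using assms monom_one_minus_one_eq_prod_roots_unity[OF assms]
  unfolding roots_unity_eq_UN_primitive_roots[OF assms] cyclotomic_def
  by (subst (asm) prod.UNION_disjoint) (auto simp: finite_primitive_roots primitive_roots_disjoint)

lemma card_primitive_roots: "n > 0 \<Longrightarrow> card (primitive_roots n) = totient n"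
proof (induction n rule: less_induct)
  case (less n)
  define D where "D = {d. d dvd n \<and> d \<noteq> n}"
  have fin: "finite D" and divisors: "{d. d dvd n} = insert n D" and "n \<notin> D"
    using less.prems by (auto simp: D_def)
  have "card (primitive_roots n) + (\<Sum>d\<in>D. card (primitive_roots d)) = n"
  proof -
    have "n = card (\<Union>d\<in>{d. d dvd n}. primitive_roots d)"
      using card_roots_unity_eq[OF less.prems] roots_unity_eq_UN_primitive_roots[OF less.prems]
      by simp
    also have "\<dots> = (\<Sum>d\<in>{d. d dvd n}. card (primitive_roots d))"
      using less.prems by (subst card_UN_disjoint)
        (auto simp: finite_primitive_roots primitive_roots_disjoint)
    finally show ?thesis using fin \<open>n \<notin> D\<close> unfolding divisors by simp
  qed
  moreover have "totient n + (\<Sum>d\<in>D. totient d) = n"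
    using totient_divisor_sum[of n] fin \<open>n \<notin> D\<close> unfolding divisors by simp
  moreover have "(\<Sum>d\<in>D. card (primitive_roots d)) = (\<Sum>d\<in>D. totient d)"
  proof (rule sum.cong[OF refl])
    fix d assume "d \<in> D"
    hence "d < n" "d > 0" using less.prems by (auto simp: D_def intro: dvd_imp_le Nat.gr0I)
    thus "card (primitive_roots d) = totient d" by (rule less.IH)
  qed
  ultimately show ?case by linarith
qed

lemma lead_coeff_cyclotomic: "lead_coeff (cyclotomic d) = 1"
  unfolding cyclotomic_def by (simp add: lead_coeff_prod)

lemma degree_cyclotomic: "n > 0 \<Longrightarrow> degree (cyclotomic n) = totient n"
  unfolding cyclotomic_def
  by (subst degree_prod_sum_eq) (auto simp: card_primitive_roots)

text \<open>\<open>\<Phi>\<^sub>n\<close> is the quotient of \<open>X^n - 1\<close> by the product of the \<open>\<Phi>\<^sub>d\<close> for proper divisors \<open>d\<close>,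
which is monic and, by induction, integral.\<close>

lemma cyclotomic_integral: "n > 0 \<Longrightarrow> \<exists>F. map_poly of_int F = cyclotomic n"
proof (induction n rule: less_induct)
  case (less n)
  define D where "D = {d. d dvd n \<and> d \<noteq> n}"
  have fin: "finite D" and divisors: "{d. d dvd n} = insert n D" and "n \<notin> D"
    using less.prems by (auto simp: D_def)
  have "\<forall>d\<in>D. \<exists>F. map_poly of_int F = cyclotomic d"
  proof
    fix d assume "d \<in> D"
    hence "d < n" "d > 0" using less.prems by (auto simp: D_def intro: dvd_imp_le Nat.gr0I)
    thus "\<exists>F. map_poly of_int F = cyclotomic d" by (rule less.IH)
  qed
  then obtain F where F: "\<And>d. d \<in> D \<Longrightarrow> map_poly of_int (F d) = cyclotomic d" by metis
  define G where "G = (\<Prod>d\<in>D. F d)"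
  have G: "map_poly of_int G = (\<Prod>d\<in>D. cyclotomic d)"
    unfolding G_def map_poly_of_int_prod by (rule prod.cong) (auto simp: F)
  have "lead_coeff (map_poly (of_int :: int \<Rightarrow> complex) G) = 1"
    unfolding G by (simp add: lead_coeff_prod lead_coeff_cyclotomic)
  hence "lead_coeff G = 1" by (simp add: degree_map_poly_of_int coeff_map_poly)
  moreover have "map_poly of_int (Polynomial.monom 1 n - 1) = cyclotomic n * map_poly of_int G"
    using monom_one_minus_one_eq_prod_cyclotomic[OF less.prems] fin \<open>n \<notin> D\<close>
    unfolding map_poly_of_int_monom_one_minus_one G divisors by simp
  ultimately show ?case by (rule map_poly_of_int_quotient_by_monic)
qed

definition int_cyclotomic :: "nat \<Rightarrow> int poly" where
  "int_cyclotomic n = (SOME F. map_poly of_int F = cyclotomic n)"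

lemma map_poly_of_int_int_cyclotomic: "n > 0 \<Longrightarrow> map_poly of_int (int_cyclotomic n) = cyclotomic n"
  unfolding int_cyclotomic_def using cyclotomic_integral by (rule someI_ex)

lemma degree_int_cyclotomic: "n > 0 \<Longrightarrow> degree (int_cyclotomic n) = totient n"
  by (metis degree_cyclotomic degree_map_poly_of_int map_poly_of_int_int_cyclotomic)

lemma monom_one_minus_one_eq_prod_int_cyclotomic:
  assumes "n > 0"
  shows "Polynomial.monom 1 n - 1 = (\<Prod>d\<in>{d. d dvd n}. int_cyclotomic d)"
proof -
  have "map_poly (of_int :: int \<Rightarrow> complex) (\<Prod>d\<in>{d. d dvd n}. int_cyclotomic d) =
        map_poly of_int (Polynomial.monom 1 n - 1)"
    unfolding map_poly_of_int_prod map_poly_of_int_monom_one_minus_one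
      monom_one_minus_one_eq_prod_cyclotomic[OF assms]
    by (rule prod.cong) (use assms in \<open>auto intro: map_poly_of_int_int_cyclotomic dvd_pos_nat\<close>)
  thus ?thesis unfolding map_poly_of_int_eq_iff by simp
qed

text \<open>\<open>homogenize F P Q = Q^(deg F) F(P/Q)\<close>, written without division.\<close>

definition homogenize :: "int poly \<Rightarrow> int poly \<Rightarrow> int poly \<Rightarrow> int poly" where
  "homogenize F P Q = (\<Sum>i\<le>degree F. Polynomial.smult (Polynomial.coeff F i) (P ^ i * Q ^ (degree F - i)))"

lemma degree_homogenize_le: "degree (homogenize F P Q) \<le> degree F * max (degree P) (degree Q)"
  unfolding homogenize_def
proof (rule degree_sum_le)
  fix i assume i: "i \<in> {..degree F}"
  let ?M = "max (degree P) (degree Q)"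
  have "degree (Polynomial.smult (Polynomial.coeff F i) (P ^ i * Q ^ (degree F - i)))
          \<le> degree (P ^ i) + degree (Q ^ (degree F - i))"
    using degree_smult_le degree_mult_le order_trans by blast
  also have "\<dots> \<le> ?M * i + ?M * (degree F - i)"
  proof -
    have "degree P * i \<le> ?M * i" "degree Q * (degree F - i) \<le> ?M * (degree F - i)"
      by (simp_all add: mult_le_mono1)
    thus ?thesis using degree_power_le[of P i] degree_power_le[of Q "degree F - i"] by linarith
  qed
  also have "\<dots> = degree F * ?M"
    using i by (simp flip: distrib_left)
  finally show "degree (Polynomial.smult (Polynomial.coeff F i) (P ^ i * Q ^ (degree F - i))) \<le> degree F * ?M" .
qed simp

lemma to_fract_power: "to_fract (x ^ n) = to_fract x ^ n"
  by (induction n) simp_all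

lemma to_fract_prod: "to_fract (prod f A) = (\<Prod>x\<in>A. to_fract (f x))"
  by (induction A rule: infinite_finite_induct) simp_all

lemma to_fract_of_int: "to_fract (of_int c :: 'a::idom) = of_int c"
proof -
  have "to_fract (of_nat n :: 'a) = of_nat n" for n
    by (induction n) simp_all
  thus ?thesis by (cases c rule: int_cases) simp_all
qed

lemma to_fract_homogenize:
  assumes "Q \<noteq> 0"
  shows "to_fract (homogenize F P Q) =
    poly (map_poly of_int F) (to_fract P / to_fract Q) * to_fract Q ^ degree F"
proof -
  let ?x = "to_fract P / to_fract Q" and ?c = "\<lambda>i. of_int (Polynomial.coeff F i) :: int poly fract"
  have "poly (map_poly of_int F) ?x * to_fract Q ^ degree F =
        (\<Sum>i\<le>degree F. ?c i * (?x ^ i * to_fract Q ^ degree F))"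
    by (simp add: poly_altdef degree_map_poly_of_int coeff_map_poly sum_distrib_right mult.assoc)
  also have "\<dots> = (\<Sum>i\<le>degree F. ?c i * (to_fract P ^ i * to_fract Q ^ (degree F - i)))"
  proof (rule sum.cong[OF refl])
    fix i assume "i \<in> {..degree F}"
    hence "to_fract Q ^ degree F = to_fract Q ^ i * to_fract Q ^ (degree F - i)"
      by (simp flip: power_add)
    thus "?c i * (?x ^ i * to_fract Q ^ degree F) = ?c i * (to_fract P ^ i * to_fract Q ^ (degree F - i))"
      using assms by (simp add: power_divide)
  qed
  also have "\<dots> = to_fract (homogenize F P Q)"
  proof -
    have "Polynomial.smult c R = of_int c * R" for c and R :: "int poly"
      by (simp add: of_int_poly)
    thus ?thesis
      unfolding homogenize_def to_fract_sum by (simp add: to_fract_of_int to_fract_power)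
  qed
  finally show ?thesis by simp
qed

lemma power_diff_power_eq_prod_homogenize:
  assumes n: "n > 0" and Q: "Q \<noteq> 0"
  shows "P ^ n - Q ^ n = (\<Prod>d\<in>{d. d dvd n}. homogenize (int_cyclotomic d) P Q)"
proof -
  let ?x = "to_fract P / to_fract Q" and ?m = "map_poly (of_int :: int \<Rightarrow> int poly fract)"
  have "(\<Sum>d\<in>{d. d dvd n}. degree (int_cyclotomic d)) = (\<Sum>d\<in>{d. d dvd n}. totient d)"
    using n by (intro sum.cong) (auto intro: degree_int_cyclotomic dvd_pos_nat)
  hence degrees: "(\<Sum>d\<in>{d. d dvd n}. degree (int_cyclotomic d)) = n"
    using totient_divisor_sum[of n] by simp
  have "to_fract (\<Prod>d\<in>{d. d dvd n}. homogenize (int_cyclotomic d) P Q) =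
        (\<Prod>d\<in>{d. d dvd n}. poly (?m (int_cyclotomic d)) ?x) *
        (\<Prod>d\<in>{d. d dvd n}. to_fract Q ^ degree (int_cyclotomic d))"
    unfolding to_fract_prod to_fract_homogenize[OF Q] by (rule prod.distrib)
  also have "\<dots> = poly (?m (Polynomial.monom 1 n - 1)) ?x * to_fract Q ^ n"
    by (simp only: monom_one_minus_one_eq_prod_int_cyclotomic[OF n] map_poly_of_int_prod poly_prod
          degrees flip: power_sum)
  also have "\<dots> = (?x ^ n - 1) * to_fract Q ^ n"
    by (simp add: map_poly_of_int_monom_one_minus_one poly_monom)
  also have "\<dots> = ?x ^ n * to_fract Q ^ n - to_fract Q ^ n"
    by (simp only: left_diff_distrib mult_1_left)
  also have "?x ^ n * to_fract Q ^ n = to_fract P ^ n"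
    using Q by (simp add: power_divide)
  also have "to_fract P ^ n - to_fract Q ^ n = to_fract (P ^ n - Q ^ n)"
    by (simp add: to_fract_power)
  finally show ?thesis unfolding to_fract_eq_iff by (rule sym)
qed

lemma degree_irreducible_dvd_power_diff_power:
  fixes P Q q :: "int poly"
  assumes n: "n > 0" and Q: "Q \<noteq> 0" and ne: "P ^ n \<noteq> Q ^ n"
    and q: "irreducible q" "q dvd P ^ n - Q ^ n"
  shows "degree q \<le> totient n * max (degree P) (degree Q)"
proof -
  let ?H = "\<lambda>d. homogenize (int_cyclotomic d) P Q"
  have "prime_elem q" using q(1) by (simp add: prime_elem_iff_irreducible)
  moreover have "q dvd prod_mset (image_mset ?H (mset_set {d. d dvd n}))"
    using q(2) by (simp add: power_diff_power_eq_prod_homogenize[OF n Q] prod_unfold_prod_mset)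
  ultimately obtain h where "h \<in># image_mset ?H (mset_set {d. d dvd n})" "q dvd h"
    by (rule prime_elem_dvd_prod_msetE)
  then obtain d where d: "d dvd n" "q dvd ?H d"
    using n by auto
  have "?H d \<noteq> 0"
  proof
    assume "?H d = 0"
    hence "(\<Prod>d\<in>{d. d dvd n}. ?H d) = 0" using d(1) n by (intro prod_zero) auto
    thus False using ne power_diff_power_eq_prod_homogenize[OF n Q, of P] by simp
  qed
  hence "degree q \<le> degree (?H d)"
    using d(2) by (rule dvd_imp_degree_le[rotated])
  also have "\<dots> \<le> degree (int_cyclotomic d) * max (degree P) (degree Q)"
    by (rule degree_homogenize_le)
  also have "degree (int_cyclotomic d) = totient d"
    using d(1) n by (intro degree_int_cyclotomic) (auto intro: dvd_pos_nat)
  also have "totient d * max (degree P) (degree Q) \<le> totient n * max (degree P) (degree Q)"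
    using d(1) n by (intro mult_right_mono totient_dvd_mono) auto
  finally show ?thesis .
qed

lemma admits_polysmoothnessI_power_diff_power:
  fixes f g P Q :: "int poly"
  assumes "degree f > 0" "degree g > 0"
    and n: "n > 0" and Q: "Q \<noteq> 0" and ne: "P ^ n \<noteq> Q ^ n" and "c \<noteq> 0"
    and comp: "pcompose f g = Polynomial.smult c (P ^ n - Q ^ n)"
    and bound: "real (totient n * max (degree P) (degree Q)) \<le> \<theta> * real (degree f) * real (degree g)"
  shows "admits_polysmoothness f \<theta>"
  unfolding admits_polysmoothness_def
proof (intro conjI exI[of _ g] allI impI)
  fix q :: "int poly" assume q: "irreducible q \<and> q dvd pcompose f g"
  hence "degree q = 0 \<or> q dvd P ^ n - Q ^ n"
    using irreducible_dvd_smult \<open>c \<noteq> 0\<close> comp by metis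
  hence "degree q \<le> totient n * max (degree P) (degree Q)"
    using degree_irreducible_dvd_power_diff_power[OF n Q ne] q by auto
  thus "real (degree q) \<le> \<theta> * real (degree f) * real (degree g)"
    using bound by (meson of_nat_le_iff order_trans)
qed fact+

lemma admits_polysmoothness_monic_trinomial:
  fixes k :: nat and a b :: int
  assumes k: "k \<ge> 2" and b: "b \<noteq> 0"
  shows "admits_polysmoothness (Polynomial.monom 1 k + Polynomial.monom a (k - 1) - [:b:])
           (real (totient (k - 1)) / real (k - 1))"
proof -
  define m where "m = k - 1"
  define f :: "int poly" where "f = Polynomial.monom 1 k + Polynomial.monom a m - [:b:]"
  define g :: "int poly" where "g = Polynomial.monom b m - [:a:]"
  define X :: "int poly" where "X = [:0, 1:]"
  have k_eq: "k = Suc m" and "m > 0" using k by (auto simp: m_def)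
  have deg_f: "degree f = k"
    by (rule degree_eqI_coeff)
      (use k in \<open>auto simp: f_def m_def coeff_monom coeff_pCons split: nat.split\<close>)
  have deg_g: "degree g = m"
    by (rule degree_eqI_coeff)
      (use \<open>m > 0\<close> b in \<open>auto simp: g_def coeff_monom coeff_pCons split: nat.split\<close>)
  hence "g \<noteq> 0" using \<open>m > 0\<close> by auto
  hence deg_gX: "degree (g * X) = k"
    by (simp add: degree_mult_eq X_def deg_g k_eq)
  have "pcompose f g = g ^ k + Polynomial.smult a (g ^ m) - [:b:]"
    by (simp add: f_def pcompose_add pcompose_diff pcompose_monom)
  also have "g ^ k + Polynomial.smult a (g ^ m) = (g + [:a:]) * g ^ m"
    by (simp add: k_eq algebra_simps)
  also have "g + [:a:] = Polynomial.smult b (X ^ m)"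
    by (simp add: g_def X_def monom_altdef)
  also have "Polynomial.smult b (X ^ m) * g ^ m - [:b:] = Polynomial.smult b ((g * X) ^ m - 1 ^ m)"
    by (simp add: power_mult_distrib algebra_simps smult_diff_right)
  finally have comp: "pcompose f g = Polynomial.smult b ((g * X) ^ m - 1 ^ m)" .
  have "(g * X) ^ m \<noteq> 1 ^ m"
  proof
    assume "(g * X) ^ m = 1 ^ m"
    hence "degree ((g * X) ^ m) = 0" by simp
    thus False using deg_gX \<open>m > 0\<close> k by (simp add: degree_power_eq \<open>g \<noteq> 0\<close> X_def)
  qed
  moreover have "real (totient m * max (degree (g * X)) (degree (1 :: int poly))) =
      real (totient m) / real m * real (degree f) * real (degree g)"
    using \<open>m > 0\<close> by (simp add: deg_f deg_g deg_gX)
  ultimately have "admits_polysmoothness f (real (totient m) / real m)"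
    using k \<open>m > 0\<close> deg_f deg_g
    by (intro admits_polysmoothnessI_power_diff_power[OF _ _ _ _ _ b comp]) simp_all
  thus ?thesis by (simp add: f_def m_def)
qed

lemma admits_polysmoothness_trinomial_linear_term:
  fixes k :: nat and a b :: int
  assumes k: "k \<ge> 2" and ab: "a * b \<noteq> 0"
  shows "admits_polysmoothness (Polynomial.monom a k - Polynomial.monom 1 1 + [:b:])
           (real (totient k) / real k)"
proof -
  have "a \<noteq> 0" using ab by auto
  define f :: "int poly" where "f = Polynomial.monom a k - Polynomial.monom 1 1 + [:b:]"
  define g :: "int poly" where "g = Polynomial.monom a k + [:b:]"
  define X :: "int poly" where "X = [:0, 1:]"
  have deg_f: "degree f = k"
    by (rule degree_eqI_coeff)
      (use k \<open>a \<noteq> 0\<close> in \<open>auto simp: f_def coeff_monom coeff_pCons split: nat.split\<close>)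
  have deg_g: "degree g = k"
    by (rule degree_eqI_coeff)
      (use k \<open>a \<noteq> 0\<close> in \<open>auto simp: g_def coeff_monom coeff_pCons split: nat.split\<close>)
  have "pcompose f g = Polynomial.smult a (g ^ k) - g + [:b:]"
    by (simp add: f_def pcompose_add pcompose_diff pcompose_monom)
  also have "g = Polynomial.smult a (X ^ k) + [:b:]"
    by (simp add: g_def X_def monom_altdef)
  finally have comp: "pcompose f g = Polynomial.smult a (g ^ k - X ^ k)"
    by (simp add: g_def X_def monom_altdef smult_diff_right)
  have "g ^ k \<noteq> X ^ k"
  proof
    assume "g ^ k = X ^ k"
    hence "degree (g ^ k) = degree (X ^ k)" by simp
    moreover have "g \<noteq> 0" using deg_g k by auto
    ultimately show False using deg_g k by (simp add: degree_power_eq X_def)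
  qed
  moreover have "real (totient k * max (degree g) (degree X)) =
      real (totient k) / real k * real (degree f) * real (degree g)"
    using k by (simp add: deg_f deg_g X_def)
  ultimately have "admits_polysmoothness f (real (totient k) / real k)"
    using k deg_f deg_g
    by (intro admits_polysmoothnessI_power_diff_power[OF _ _ _ _ _ \<open>a \<noteq> 0\<close> comp]) (simp_all add: X_def)
  thus ?thesis by (simp add: f_def)
qed

theorem theorem1p5:
  fixes k :: nat
  assumes "k \<ge> 2"
  shows "(\<forall>a b :: int. b \<noteq> 0 \<longrightarrow>
            admits_polysmoothness (Polynomial.monom 1 k + Polynomial.monom a (k - 1) - [:b:])
              (real (totient (k - 1)) / real (k - 1)))
       \<and> (\<forall>a b :: int. a * b \<noteq> 0 \<longrightarrow>
            admits_polysmoothness (Polynomial.monom a k - Polynomial.monom 1 1 + [:b:])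
              (real (totient k) / real k))"
  using admits_polysmoothness_monic_trinomial[OF assms]
    admits_polysmoothness_trinomial_linear_term[OF assms] by blast

end
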